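(* Fix $M>1$ and a mass $m>0$. There is a constant $K>0$ (independent of the graph and of the scale attribution) such that for every connected Feynman graph $\mathcal{G}$ of the rank-$6$ quartic melonic $U(1)$ model, every choice of the (fixed) momenta of its external faces, and every scale attribution $\mu=\{i_\ell\}_{\ell\in\mathcal{L}(\mathcal{G})}$, the sliced amplitude satisfies $$|\mathcal{A}_{\mu}(\mathcal{G})|\leq K^{L(\mathcal{G})}\prod_{i\ge 1}\prod_{k=1}^{k(i)}M^{\omega(\mathcal{G}_i^k)},$$ where for a connected subgraph $\mathcal{H}$ the divergence degree is $\omega(\mathcal{H})=-2L(\mathcal{H})+F(\mathcal{H})-R(\mathcal{H})$.
   Context: Momenta: $\vec p=(p_1,\dots,p_6)\in\mathbb{Z}^6$, $\vec p^{\,2}=\sum_c p_c^2$. Covariance $C(\vec p)=\delta(\sum_c p_c,0)/(\vec p^{\,2}+m^2)$ (Kronecker delta). Slices: $\chi_1(\vec p)=1$ if $\vec p^{\,2}\le M^2$ and $0$ otherwise; for $i\ge2$, $\chi_i(\vec p)=1$ if $M^{2(i-1)}<\vec p^{\,2}\le M^{2i}$ and $0$ otherwise; $C_i(\vec p)=C(\vec p)\chi_i(\vec p)$. Feynman graphs: each interaction vertex is a "bubble" $b_c$ ($c\in\{1,\dots,6\}$), a bipartite edge-colored graph on two white nodes $w_1,w_2$ (fields $\bar\phi$) and two black nodes $b_1,b_2$ (fields $\phi$), with edges of all colors $c'\neq c$ between $w_1,b_1$ and between $w_2,b_2$, and edges of color $c$ between $w_1,b_2$ and between $w_2,b_1$.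 A Feynman graph $\mathcal{G}$ is obtained by joining black and white nodes of such bubbles by color-$0$ edges called lines (set $\mathcal{L}(\mathcal{G})$, number $L(\mathcal{G})$), possibly leaving some nodes with external color-$0$ half-lines. Faces are the connected components of the subgraphs with colors $\{0,c\}$, $c=1,\dots,6$; closed ones (cycles) are internal faces, those ending on external half-lines are external faces. Each internal face $f$ carries a summed momentum $p_f\in\mathbb{Z}$, each external face a fixed momentum; a line $\ell$ carries $\vec p^{\,\ell}\in\mathbb{Z}^6$ whose $c$-component is the momentum of the face of colors $\{0,c\}$ through $\ell$. For a scale attribution $\mu$ (an integer $i_\ell\ge1$ per line), $\mathcal{A}_\mu(\mathcal{G})=\sum_{(p_f)_{f \text{ internal}}}\prod_{\ell}C_{i_\ell}(\vec p^{\,\ell})$. For $i\ge1$, $\mathcal{G}_i$ is the subgraph formed by the lines with $i_\ell\ge i$ (with the bubbles they touch), with connected components $\mathcal{G}_i^1,\dots,\mathcal{G}_i^{k(i)}$. For a subgraph $\mathcal{H}$: $L(\mathcal{H})$ is its number of lines, $F(\mathcal{H})$ the number of its internal faces (faces of $\mathcal{G}$ that are cycles all of whose color-$0$ edges lie in $\mathcal{H}$), and $R(\mathcal{H})$ the rank of the incidence matrix $\epsilon_{\ell f}$ between lines $\ell$ of $\mathcal{H}$ and internal faces $f$ of $\mathcal{H}$ ($\epsilon_{\ell f}\neq0$ iff $\ell$ lies on $f$, with value $\pm1$ according to relative orientation). *)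

theory Defs
  imports "HOL-Analysis.Analysis"
begin

text \<open>A node is (b, w, j): bubble b,
  w = True for a white node (field phibar), w = False for a black node (field phi),
  j = False for index 1, j = True for index 2.\<close>

type_synonym node = "nat \<times> bool \<times> bool"
type_synonym line = "node \<times> node"   \<comment> \<open>(white node, black node)\<close>
type_synonym face = "nat \<times> node set" \<comment> \<open>(colour c, node set of the {0,c}-component)\<close>

definition graph_nodes :: "nat set \<Rightarrow> node set" where
  "graph_nodes B = {(b, w, j). b \<in> B}"

definition bub :: "node \<Rightarrow> nat" where
  "bub x = fst x"

text \<open>The colour-c partner of a node inside its bubble (bubble b has colour col b):
  for c \<noteq> col b, w1-b1 and w2-b2; for c = col b, w1-b2 and w2-b1.\<close>
definition cpart :: "(nat \<Rightarrow> nat) \<Rightarrow> nat \<Rightarrow> node \<Rightarrow> node" where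
  "cpart col c x = (case x of (b, w, j) \<Rightarrow> (b, \<not> w, if c = col b then \<not> j else j))"

text \<open>A Feynman graph: finite set of bubbles B with colours in {1..6}, and a set of
  lines L, each joining a white node to a black node of the bubbles in B, every node
  carrying at most one line (graph_nodes without a line carry an external half-line).\<close>
definition feyn_graph :: "nat set \<Rightarrow> (nat \<Rightarrow> nat) \<Rightarrow> line set \<Rightarrow> bool" where
  "feyn_graph B col L \<longleftrightarrow> finite B \<and> (\<forall>b\<in>B. col b \<in> {1..6}) \<and>
     (\<forall>(x, y)\<in>L. x \<in> graph_nodes B \<and> y \<in> graph_nodes B \<and> fst (snd x) \<and> \<not> fst (snd y)) \<and>
     inj_on fst L \<and> inj_on snd L"

definition matched :: "line set \<Rightarrow> node \<Rightarrow> bool" where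
  "matched L x \<longleftrightarrow> (\<exists>l\<in>L. fst l = x \<or> snd l = x)"

definition connected_graph :: "nat set \<Rightarrow> line set \<Rightarrow> bool" where
  "connected_graph B L \<longleftrightarrow>
     (\<forall>b\<in>B. \<forall>b'\<in>B. (b, b') \<in> ({(bub (fst l), bub (snd l)) | l. l \<in> L} \<union>
                                 {(bub (snd l), bub (fst l)) | l. l \<in> L})\<^sup>*)"

text \<open>Edges of the subgraph of colours {0,c}.\<close>
definition face_rel :: "(nat \<Rightarrow> nat) \<Rightarrow> line set \<Rightarrow> nat \<Rightarrow> node rel" where
  "face_rel col L c = {(x, cpart col c x) | x. True} \<union> L \<union> L\<inverse>"

definition face_comp :: "(nat \<Rightarrow> nat) \<Rightarrow> line set \<Rightarrow> nat \<Rightarrow> node \<Rightarrow> node set" where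
  "face_comp col L c x = {y. (x, y) \<in> (face_rel col L c)\<^sup>*}"

definition all_faces :: "nat set \<Rightarrow> (nat \<Rightarrow> nat) \<Rightarrow> line set \<Rightarrow> face set" where
  "all_faces B col L = {(c, face_comp col L c x) | c x. c \<in> {1..6} \<and> x \<in> graph_nodes B}"

text \<open>Internal all_faces are the closed ones (cycles): every node on them carries a line.\<close>
definition int_faces :: "nat set \<Rightarrow> (nat \<Rightarrow> nat) \<Rightarrow> line set \<Rightarrow> face set" where
  "int_faces B col L = {f \<in> all_faces B col L. \<forall>x\<in>snd f. matched L x}"

definition ext_faces :: "nat set \<Rightarrow> (nat \<Rightarrow> nat) \<Rightarrow> line set \<Rightarrow> face set" where
  "ext_faces B col L = all_faces B col L - int_faces B col L"

definition face_thru :: "(nat \<Rightarrow> nat) \<Rightarrow> line set \<Rightarrow> nat \<Rightarrow> line \<Rightarrow> face" where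
  "face_thru col L c l = (c, face_comp col L c (fst l))"

definition on_face :: "(nat \<Rightarrow> nat) \<Rightarrow> line set \<Rightarrow> line \<Rightarrow> face \<Rightarrow> bool" where
  "on_face col L l f \<longleftrightarrow> face_thru col L (fst f) l = f"

text \<open>Incidence matrix (all lines oriented white to black; all_faces oriented accordingly,
  so every nonzero entry is +1).\<close>
definition eps :: "(nat \<Rightarrow> nat) \<Rightarrow> line set \<Rightarrow> line \<Rightarrow> face \<Rightarrow> real" where
  "eps col L l f = (if on_face col L l f then 1 else 0)"

definition sub_int_faces :: "nat set \<Rightarrow> (nat \<Rightarrow> nat) \<Rightarrow> line set \<Rightarrow> line set \<Rightarrow> face set" where
  "sub_int_faces B col L H = {f \<in> int_faces B col L. \<forall>l\<in>L. on_face col L l f \<longrightarrow> l \<in> H}"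

definition lin_indep_rows :: "('r \<Rightarrow> 'c \<Rightarrow> real) \<Rightarrow> 'r set \<Rightarrow> 'c set \<Rightarrow> bool" where
  "lin_indep_rows A S Cs \<longleftrightarrow>
     (\<forall>a :: 'r \<Rightarrow> real. (\<forall>f\<in>Cs. (\<Sum>r\<in>S. a r * A r f) = 0) \<longrightarrow> (\<forall>r\<in>S. a r = 0))"

definition mat_rank :: "('r \<Rightarrow> 'c \<Rightarrow> real) \<Rightarrow> 'r set \<Rightarrow> 'c set \<Rightarrow> nat" where
  "mat_rank A R Cs = Max {card S | S. S \<subseteq> R \<and> lin_indep_rows A S Cs}"

definition F_sub :: "nat set \<Rightarrow> (nat \<Rightarrow> nat) \<Rightarrow> line set \<Rightarrow> line set \<Rightarrow> nat" where
  "F_sub B col L H = card (sub_int_faces B col L H)"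

definition R_sub :: "nat set \<Rightarrow> (nat \<Rightarrow> nat) \<Rightarrow> line set \<Rightarrow> line set \<Rightarrow> nat" where
  "R_sub B col L H = mat_rank (eps col L) H (sub_int_faces B col L H)"

definition omega_deg :: "nat set \<Rightarrow> (nat \<Rightarrow> nat) \<Rightarrow> line set \<Rightarrow> line set \<Rightarrow> int" where
  "omega_deg B col L H = - 2 * int (card H) + int (F_sub B col L H) - int (R_sub B col L H)"

text \<open>Propagator and slices; momenta p = (p_1..p_6) as functions on colours 1..6.\<close>
definition psq :: "(nat \<Rightarrow> int) \<Rightarrow> int" where
  "psq p = (\<Sum>c=1..6. (p c)\<^sup>2)"

definition cov :: "real \<Rightarrow> (nat \<Rightarrow> int) \<Rightarrow> real" where
  "cov m p = (if (\<Sum>c=1..6. p c) = 0 then 1 else 0) / (real_of_int (psq p) + m\<^sup>2)"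

definition chi :: "real \<Rightarrow> nat \<Rightarrow> (nat \<Rightarrow> int) \<Rightarrow> real" where
  "chi M i p = (if i = 1 then (if real_of_int (psq p) \<le> M\<^sup>2 then 1 else 0)
               else (if M ^ (2 * (i - 1)) < real_of_int (psq p) \<and> real_of_int (psq p) \<le> M ^ (2 * i)
                     then 1 else 0))"

definition cov_slice :: "real \<Rightarrow> real \<Rightarrow> nat \<Rightarrow> (nat \<Rightarrow> int) \<Rightarrow> real" where
  "cov_slice M m i p = cov m p * chi M i p"

text \<open>Momentum of line l: c-component is the momentum of the {0,c}-face through l;
  P gives the (summed) internal face momenta, E the fixed external face momenta.\<close>
definition line_mom :: "nat set \<Rightarrow> (nat \<Rightarrow> nat) \<Rightarrow> line set \<Rightarrow> (face \<Rightarrow> int) \<Rightarrow> (face \<Rightarrow> int)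
                        \<Rightarrow> line \<Rightarrow> nat \<Rightarrow> int" where
  "line_mom B col L P E l c =
     (let f = face_thru col L c l in if f \<in> int_faces B col L then P f else E f)"

definition amplitude :: "real \<Rightarrow> real \<Rightarrow> nat set \<Rightarrow> (nat \<Rightarrow> nat) \<Rightarrow> line set \<Rightarrow> (face \<Rightarrow> int)
                         \<Rightarrow> (line \<Rightarrow> nat) \<Rightarrow> real" where
  "amplitude M m B col L E mu =
     (\<Sum>\<^sub>\<infinity>P\<in>{P :: face \<Rightarrow> int. \<forall>f. f \<notin> int_faces B col L \<longrightarrow> P f = 0}.
        \<Prod>l\<in>L. cov_slice M m (mu l) (line_mom B col L P E l))"

text \<open>G_i: lines of scale at least i; its connected line_comps as sets of lines
  (two lines are adjacent when they touch a common bubble).\<close>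
definition lines_ge :: "line set \<Rightarrow> (line \<Rightarrow> nat) \<Rightarrow> nat \<Rightarrow> line set" where
  "lines_ge L mu i = {l \<in> L. i \<le> mu l}"

definition line_adj :: "line set \<Rightarrow> line rel" where
  "line_adj H = {(l, l'). l \<in> H \<and> l' \<in> H \<and>
                   {bub (fst l), bub (snd l)} \<inter> {bub (fst l'), bub (snd l')} \<noteq> {}}"

definition line_comps :: "line set \<Rightarrow> line set set" where
  "line_comps H = {{l' \<in> H. (l, l') \<in> (line_adj H)\<^sup>*} | l. l \<in> H}"

end

theory Submission
  imports Defs
begin

text \<open>A sliced propagator of scale i is at most C M^(-2i) and vanishes unless its
  momentum p satisfies \<Sum>_c p_c = 0 and |p_c| \<le> M^i. Hence the momentum of an internal face f is
  at most M^(i_f), where i_f is the smallest scale of its lines, and the constraints \<Sum>_c p_c = 0, whose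
  coefficients form the incidence matrix, determine the momenta of a set S of faces with independent
  rows from the other momenta. Choosing S such that S \<inter> F_i spans the set F_i of faces of scale \<ge> i for
  every i, at most \<Prod>_(f\<notin>S) 3 M^(i_f) terms are nonzero, and slicing the exponents by scale gives the
  exponent \<Sum>_i (-2 L(G_i) + |F_i| - |S \<inter> F_i|). Every face of F_i is internal to a single component of
  G_i, so |F_i| \<le> \<Sum>_k F(G_i^k); and independent rows of the incidence matrices of the components stay
  independent together and lie in the span of S \<inter> F_i, so \<Sum>_k R(G_i^k) \<le> |S \<inter> F_i|.\<close>

section \<open>Rows of a real matrix\<close>

lemma nontrivial_vanishing_combination:
  fixes A :: "'r \<Rightarrow> 'c \<Rightarrow> real"
  assumes "finite Cs" "finite R" "card Cs < card R"
  shows "\<exists>a. (\<forall>c\<in>Cs. (\<Sum>r\<in>R. a r * A r c) = 0) \<and> (\<exists>r\<in>R. a r \<noteq> 0)"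
  using assms
proof (induction Cs arbitrary: R A rule: finite_induct)
  case (empty R A)
  then obtain r where "r \<in> R" by fastforce
  then show ?case by (intro exI[of _ "\<lambda>_. 1"]) auto
next
  case (insert s Cs R A)
  show ?case
  proof (cases "\<forall>r\<in>R. A r s = 0")
    case True
    from insert.IH[of R A] insert.prems insert.hyps obtain a where
      "\<forall>c\<in>Cs. (\<Sum>r\<in>R. a r * A r c) = 0" "\<exists>r\<in>R. a r \<noteq> 0" by auto
    then show ?thesis using True by (intro exI[of _ a]) auto
  next
    case False
    then obtain r0 where r0: "r0 \<in> R" "A r0 s \<noteq> 0" by auto
    \<comment> \<open>Gaussian elimination: clear column \<open>s\<close> with the pivot row \<open>r0\<close> and recurse on the other rows.\<close>
    define A' where "A' r c = A r c - (A r s / A r0 s) * A r0 c" for r c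
    have "card Cs < card (R - {r0})" using insert r0 by auto
    with insert.IH[of "R - {r0}" A'] insert.prems obtain a' where
      a': "\<forall>c\<in>Cs. (\<Sum>r\<in>R - {r0}. a' r * A' r c) = 0" "\<exists>r\<in>R - {r0}. a' r \<noteq> 0" by auto
    define a where "a r = (if r = r0 then - (\<Sum>q\<in>R - {r0}. a' q * A q s) / A r0 s else a' r)" for r
    have split: "(\<Sum>r\<in>R. a r * A r c) = a r0 * A r0 c + (\<Sum>r\<in>R - {r0}. a' r * A r c)" for c
      using r0 insert.prems by (simp add: sum.remove a_def)
    have "(\<Sum>r\<in>R. a r * A r c) = 0" if "c \<in> Cs" for c
    proof -
      have "(\<Sum>r\<in>R - {r0}. a' r * A r c)
          = (\<Sum>r\<in>R - {r0}. a' r * A' r c + a' r * A r s / A r0 s * A r0 c)"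
        using r0 by (intro sum.cong) (auto simp: A'_def field_simps)
      also have "\<dots> = (\<Sum>r\<in>R - {r0}. a' r * A r s) / A r0 s * A r0 c"
        using a'(1) that by (simp add: sum.distrib sum_distrib_right sum_divide_distrib)
      finally show ?thesis using split[of c] r0 by (simp add: a_def)
    qed
    moreover have "(\<Sum>r\<in>R. a r * A r s) = 0" using split[of s] r0 by (simp add: a_def)
    ultimately have "\<forall>c\<in>insert s Cs. (\<Sum>r\<in>R. a r * A r c) = 0" by simp
    moreover have "\<exists>r\<in>R. a r \<noteq> 0" using a'(2) by (auto simp: a_def)
    ultimately show ?thesis by blast
  qed
qed

definition in_row_span :: "('r \<Rightarrow> 'c \<Rightarrow> real) \<Rightarrow> 'r set \<Rightarrow> 'r \<Rightarrow> 'c set \<Rightarrow> bool" where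
  "in_row_span A S r Cs \<longleftrightarrow> (\<exists>w. \<forall>c\<in>Cs. A r c = (\<Sum>s\<in>S. w s * A s c))"

lemma in_row_span_mono:
  assumes "in_row_span A S r Cs" "S \<subseteq> S'" "finite S'"
  shows "in_row_span A S' r Cs"
proof -
  obtain w where w: "\<forall>c\<in>Cs. A r c = (\<Sum>s\<in>S. w s * A s c)"
    using assms(1) unfolding in_row_span_def by blast
  define w' where "w' s = (if s \<in> S then w s else 0)" for s
  have "(\<Sum>s\<in>S'. w' s * A s c) = (\<Sum>s\<in>S. w s * A s c)" for c
    using assms(2,3) by (intro sum.mono_neutral_cong_right) (auto simp: w'_def)
  then show ?thesis unfolding in_row_span_def using w by (intro exI[of _ w']) auto
qed

lemma in_row_span_member:
  assumes "r \<in> S" "finite S"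
  shows "in_row_span A S r Cs"
proof -
  have "(\<Sum>s\<in>S. (if s = r then 1 else 0) * A s c) = A r c" for c
  proof -
    have "(\<Sum>s\<in>S. (if s = r then 1 else 0) * A s c) = (\<Sum>s\<in>S. if s = r then A s c else 0)"
      by (intro sum.cong) auto
    then show ?thesis using assms by simp
  qed
  then show ?thesis unfolding in_row_span_def
    by (intro exI[of _ "\<lambda>s. if s = r then 1 else 0"]) simp
qed

lemma in_row_span_if_not_lin_indep_insert:
  assumes "finite S" "r \<notin> S" "lin_indep_rows A S Cs" "\<not> lin_indep_rows A (insert r S) Cs"
  shows "in_row_span A S r Cs"
proof -
  from assms(4) obtain a where a: "\<forall>c\<in>Cs. (\<Sum>s\<in>insert r S. a s * A s c) = 0"
    "\<exists>s\<in>insert r S. a s \<noteq> 0" unfolding lin_indep_rows_def by blast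
  have eq: "a r * A r c + (\<Sum>s\<in>S. a s * A s c) = 0" if "c \<in> Cs" for c
    using a(1) that assms(1,2) by simp
  have "a r \<noteq> 0"
  proof
    assume "a r = 0"
    then have "\<forall>c\<in>Cs. (\<Sum>s\<in>S. a s * A s c) = 0" using eq by simp
    then have "\<forall>s\<in>S. a s = 0" using assms(3) unfolding lin_indep_rows_def by blast
    then show False using a(2) \<open>a r = 0\<close> by auto
  qed
  have "A r c = (\<Sum>s\<in>S. (- a s / a r) * A s c)" if "c \<in> Cs" for c
  proof -
    have "(\<Sum>s\<in>S. (- a s / a r) * A s c) = - (\<Sum>s\<in>S. a s * A s c) / a r"
      by (simp add: sum_divide_distrib sum_negf)
    also have "\<dots> = A r c" using eq[OF that] \<open>a r \<noteq> 0\<close> by (simp add: field_simps)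
    finally show ?thesis by simp
  qed
  then show ?thesis unfolding in_row_span_def by (intro exI[of _ "\<lambda>s. - a s / a r"]) simp
qed

text \<open>Row rank is at most column rank: the columns \<open>Cs\<close> of the rows \<open>R\<close> are combinations of the
  columns \<open>S\<close>.\<close>
lemma card_lin_indep_rows_le:
  assumes "finite R" "finite S" "lin_indep_rows A R Cs"
    and span: "\<forall>c\<in>Cs. in_row_span (\<lambda>c r. A r c) S c R"
  shows "card R \<le> card S"
proof (rule ccontr)
  assume "\<not> card R \<le> card S"
  then obtain a where a: "\<forall>s\<in>S. (\<Sum>r\<in>R. a r * A r s) = 0" "\<exists>r\<in>R. a r \<noteq> 0"
    using nontrivial_vanishing_combination[OF assms(2,1), of A] by auto
  have "(\<Sum>r\<in>R. a r * A r c) = 0" if "c \<in> Cs" for c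
  proof -
    from span that obtain w where w: "\<forall>r\<in>R. A r c = (\<Sum>s\<in>S. w s * A r s)"
      unfolding in_row_span_def by blast
    have "(\<Sum>r\<in>R. a r * A r c) = (\<Sum>r\<in>R. \<Sum>s\<in>S. a r * (w s * A r s))"
      using w by (simp add: sum_distrib_left)
    also have "\<dots> = (\<Sum>s\<in>S. w s * (\<Sum>r\<in>R. a r * A r s))"
      by (subst sum.swap) (simp add: sum_distrib_left mult.left_commute)
    also have "\<dots> = 0" using a(1) by simp
    finally show ?thesis .
  qed
  moreover have "(\<forall>c\<in>Cs. (\<Sum>r\<in>R. a r * A r c) = 0) \<longrightarrow> (\<forall>r\<in>R. a r = 0)"
    using assms(3) unfolding lin_indep_rows_def by (rule spec)
  ultimately show False using a(2) by auto
qed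

lemma lin_indep_rows_extend_spanning:
  assumes "finite F" "S \<subseteq> F" "lin_indep_rows A S Cs"
  shows "\<exists>S'. S \<subseteq> S' \<and> S' \<subseteq> F \<and> lin_indep_rows A S' Cs \<and> (\<forall>r\<in>F. in_row_span A S' r Cs)"
proof -
  define Q where "Q = {S'. S \<subseteq> S' \<and> S' \<subseteq> F \<and> lin_indep_rows A S' Cs}"
  have "Q \<subseteq> Pow F" unfolding Q_def by auto
  then have "finite Q" using assms(1) by (simp add: finite_subset)
  moreover have "S \<in> Q" using assms unfolding Q_def by auto
  ultimately have "Max (card ` Q) \<in> card ` Q" by (intro Max_in) auto
  then obtain S' where S': "S' \<in> Q" "card S' = Max (card ` Q)" by auto
  have max: "card X \<le> card S'" if "X \<in> Q" for X using S'(2) \<open>finite Q\<close> that by simp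
  have S'F: "S \<subseteq> S'" "S' \<subseteq> F" "lin_indep_rows A S' Cs" using S'(1) unfolding Q_def by auto
  have "finite S'" using S'F(2) assms(1) by (rule finite_subset)
  have "in_row_span A S' r Cs" if "r \<in> F" for r
  proof (cases "r \<in> S'")
    case False
    have "\<not> lin_indep_rows A (insert r S') Cs"
    proof
      assume "lin_indep_rows A (insert r S') Cs"
      then have "insert r S' \<in> Q" using S'F that unfolding Q_def by auto
      then have "card (insert r S') \<le> card S'" by (rule max)
      then show False using False \<open>finite S'\<close> by simp
    qed
    then show ?thesis using in_row_span_if_not_lin_indep_insert[OF \<open>finite S'\<close> False S'F(3)] by simp
  qed (rule in_row_span_member[OF _ \<open>finite S'\<close>])
  then show ?thesis using S'F by blast
qed

text \<open>Built from the top level down, extending the independent set level by level.\<close>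
lemma exists_lin_indep_rows_spanning_filtration:
  fixes F :: "nat \<Rightarrow> 'r set"
  assumes fin: "\<And>i. finite (F i)" and decr: "\<And>i. F (Suc i) \<subseteq> F i"
    and empty: "\<And>i. N < i \<Longrightarrow> F i = {}"
  shows "\<exists>S \<subseteq> F 0. lin_indep_rows A S Cs \<and> (\<forall>i. \<forall>r\<in>F i. in_row_span A (S \<inter> F i) r Cs)"
proof -
  have "\<exists>S \<subseteq> F k. lin_indep_rows A S Cs \<and> (\<forall>i\<ge>k. \<forall>r\<in>F i. in_row_span A (S \<inter> F i) r Cs)"
    if "k \<le> Suc N" for k
    using that
  proof (induction k rule: inc_induct)
    case base
    show ?case by (intro exI[of _ "{}"]) (auto simp: empty lin_indep_rows_def)
  next
    case (step k)
    then obtain S where S: "S \<subseteq> F (Suc k)" "lin_indep_rows A S Cs"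
      "\<forall>i\<ge>Suc k. \<forall>r\<in>F i. in_row_span A (S \<inter> F i) r Cs" by blast
    obtain S' where S': "S \<subseteq> S'" "S' \<subseteq> F k" "lin_indep_rows A S' Cs"
      "\<forall>r\<in>F k. in_row_span A S' r Cs"
      using lin_indep_rows_extend_spanning[OF fin S(1)[THEN order_trans, OF decr] S(2)] by blast
    have "finite S'" using S'(2) fin by (rule finite_subset)
    have "in_row_span A (S' \<inter> F i) r Cs" if "k \<le> i" "r \<in> F i" for i r
    proof (cases "i = k")
      case True
      then show ?thesis using S'(2,4) that(2) Int_absorb2 by metis
    next
      case False
      then have "in_row_span A (S \<inter> F i) r Cs" using S(3) that by simp
      then show ?thesis by (rule in_row_span_mono) (use S'(1) \<open>finite S'\<close> in auto)
    qed
    then show ?case using S' by blast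
  qed
  from this[of 0] show ?thesis by simp
qed

lemma mat_rank_attained:
  assumes "finite R"
  shows "\<exists>S \<subseteq> R. lin_indep_rows A S Cs \<and> card S = mat_rank A R Cs"
proof -
  let ?ranks = "{card S | S. S \<subseteq> R \<and> lin_indep_rows A S Cs}"
  have "?ranks \<subseteq> card ` Pow R" by auto
  moreover have "finite (card ` Pow R)" using assms by simp
  ultimately have "finite ?ranks" by (rule finite_subset)
  moreover have "card {} \<in> ?ranks"
    by (intro CollectI exI[of _ "{}"]) (simp add: lin_indep_rows_def)
  ultimately have "Max ?ranks \<in> ?ranks" by (intro Max_in) auto
  then show ?thesis unfolding mat_rank_def by auto
qed

section \<open>Faces and lines\<close>

lemma finite_lines:
  assumes "feyn_graph B col L"
  shows "finite L"
proof -
  have "graph_nodes B \<subseteq> B \<times> UNIV" unfolding graph_nodes_def by auto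
  moreover have "finite (B \<times> (UNIV :: (bool \<times> bool) set))"
    using assms unfolding feyn_graph_def by simp
  ultimately have "finite (graph_nodes B)" by (rule finite_subset)
  moreover have "L \<subseteq> graph_nodes B \<times> graph_nodes B"
    using assms unfolding feyn_graph_def by auto
  ultimately show ?thesis by (meson finite_SigmaI finite_subset)
qed

lemma cpart_cpart [simp]: "cpart col c (cpart col c x) = x"
  by (cases x) (auto simp: cpart_def)

lemma bub_cpart [simp]: "bub (cpart col c x) = bub x"
  by (cases x) (auto simp: cpart_def bub_def)

lemma sym_face_rel: "sym (face_rel col L c)"
proof (rule symI)
  fix x y assume "(x, y) \<in> face_rel col L c"
  then consider "y = cpart col c x" | "(x, y) \<in> L" | "(y, x) \<in> L"
    unfolding face_rel_def by auto
  then show "(y, x) \<in> face_rel col L c"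
  proof cases
    case 1
    have "(y, cpart col c y) \<in> {(x, cpart col c x) | x. True}" by blast
    then show ?thesis using 1 unfolding face_rel_def by simp
  qed (auto simp: face_rel_def)
qed

lemma face_comp_self: "x \<in> face_comp col L c x"
  unfolding face_comp_def by simp

lemma face_comp_eq:
  assumes "y \<in> face_comp col L c x"
  shows "face_comp col L c y = face_comp col L c x"
proof -
  have xy: "(x, y) \<in> (face_rel col L c)\<^sup>*" using assms unfolding face_comp_def by simp
  then have "(y, x) \<in> (face_rel col L c)\<^sup>*" using sym_rtrancl[OF sym_face_rel] by (meson symD)
  then show ?thesis unfolding face_comp_def using xy by (auto intro: rtrancl_trans)
qed

lemma on_face_iff: "on_face col L l f \<longleftrightarrow> face_comp col L (fst f) (fst l) = snd f"
  unfolding on_face_def face_thru_def by (cases f) auto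

lemma colour_int_face: "f \<in> int_faces B col L \<Longrightarrow> fst f \<in> {1..6}"
  unfolding int_faces_def all_faces_def by auto

definition face_lines :: "(nat \<Rightarrow> nat) \<Rightarrow> line set \<Rightarrow> face \<Rightarrow> line set" where
  "face_lines col L f = {l \<in> L. on_face col L l f}"

lemma finite_face_lines: "finite L \<Longrightarrow> finite (face_lines col L f)"
  unfolding face_lines_def by simp

lemma face_lines_nonempty:
  assumes "f \<in> int_faces B col L"
  shows "face_lines col L f \<noteq> {}"
proof -
  from assms obtain c x where f: "f = (c, face_comp col L c x)"
    and matched: "\<forall>y\<in>snd f. matched L y"
    unfolding int_faces_def all_faces_def by auto
  have "matched L x" using matched f face_comp_self by fastforce
  then obtain l where l: "l \<in> L" "fst l = x \<or> snd l = x" unfolding matched_def by auto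
  have "fst l \<in> face_comp col L c x"
  proof (cases "fst l = x")
    case False
    then have "(x, fst l) \<in> face_rel col L c" using l unfolding face_rel_def by (cases l) auto
    then show ?thesis unfolding face_comp_def by auto
  qed (use face_comp_self in metis)
  then have "on_face col L l f" using face_comp_eq f by (simp add: on_face_iff)
  then show ?thesis using l(1) unfolding face_lines_def by blast
qed

lemma int_faces_subset_face_thru:
  "int_faces B col L \<subseteq> (\<lambda>(c, l). face_thru col L c l) ` ({1..6} \<times> L)"
proof
  fix f assume f: "f \<in> int_faces B col L"
  then obtain l where "l \<in> L" "on_face col L l f"
    using face_lines_nonempty unfolding face_lines_def by blast
  moreover have "fst f \<in> {1..6}" using f by (rule colour_int_face)
  ultimately show "f \<in> (\<lambda>(c, l). face_thru col L c l) ` ({1..6} \<times> L)"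
    unfolding on_face_def by force
qed

lemma finite_int_faces: "finite L \<Longrightarrow> finite (int_faces B col L)"
  by (rule finite_subset[OF int_faces_subset_face_thru]) simp

lemma card_int_faces_le:
  assumes "finite L"
  shows "card (int_faces B col L) \<le> 6 * card L"
proof -
  have "card (int_faces B col L) \<le> card ((\<lambda>(c, l). face_thru col L c l) ` ({1..6::nat} \<times> L))"
    using assms by (intro card_mono int_faces_subset_face_thru) auto
  also have "\<dots> \<le> card ({1..6::nat} \<times> L)" by (rule card_image_le) (use assms in auto)
  finally show ?thesis by (simp add: card_cartesian_product)
qed

section \<open>Connected components of sets of lines\<close>

definition line_comp :: "line set \<Rightarrow> line \<Rightarrow> line set" where
  "line_comp H l = {l' \<in> H. (l, l') \<in> (line_adj H)\<^sup>*}"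

lemma line_comps_eq_image: "line_comps H = line_comp H ` H"
  unfolding line_comps_def line_comp_def by blast

lemma sym_line_adj: "sym (line_adj H)"
  unfolding sym_def line_adj_def by auto

lemma line_comp_eq:
  assumes "l' \<in> line_comp H l"
  shows "line_comp H l' = line_comp H l"
proof -
  have ll': "(l, l') \<in> (line_adj H)\<^sup>*" using assms unfolding line_comp_def by simp
  then have "(l', l) \<in> (line_adj H)\<^sup>*" using sym_rtrancl[OF sym_line_adj] by (meson symD)
  then show ?thesis unfolding line_comp_def using ll' by (auto intro: rtrancl_trans)
qed

lemma line_comps_subset: "X \<in> line_comps H \<Longrightarrow> X \<subseteq> H"
  unfolding line_comps_eq_image line_comp_def by blast

lemma finite_line_comps: "finite H \<Longrightarrow> finite (line_comps H)"
  unfolding line_comps_eq_image by simp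

lemma line_comps_disjoint:
  assumes "X \<in> line_comps H" "Y \<in> line_comps H" "X \<noteq> Y"
  shows "X \<inter> Y = {}"
proof (rule ccontr)
  assume "X \<inter> Y \<noteq> {}"
  then obtain z where "z \<in> X" "z \<in> Y" by blast
  moreover obtain a b where "X = line_comp H a" "Y = line_comp H b"
    using assms(1,2) line_comps_eq_image by auto
  ultimately have "X = line_comp H z" "Y = line_comp H z" using line_comp_eq by metis+
  then show False using assms(3) by simp
qed

lemma sum_card_line_comps:
  assumes "finite H"
  shows "(\<Sum>X\<in>line_comps H. card X) = card H"
proof -
  have "\<Union>(line_comps H) = H"
    unfolding line_comps_eq_image line_comp_def by blast
  moreover have "card (\<Union>(line_comps H)) = (\<Sum>X\<in>line_comps H. card X)"
  proof (rule card_Union_disjoint)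
    show "pairwise disjnt (line_comps H)"
      unfolding pairwise_def disjnt_def using line_comps_disjoint by blast
    show "finite X" if "X \<in> line_comps H" for X
      using assms line_comps_subset[OF that] finite_subset by blast
  qed
  ultimately show ?thesis by simp
qed

text \<open>Walking along a face, one passes from a line to the next through a bubble, so the bubbles
  the face visits are all touched by lines of one component.\<close>
lemma face_visits_bubbles_of_line_comp:
  assumes l0: "l0 \<in> face_lines col L f" and H: "face_lines col L f \<subseteq> H"
    and "(fst l0, z) \<in> (face_rel col L (fst f))\<^sup>*"
  shows "\<exists>l\<in>line_comp H l0. bub z \<in> {bub (fst l), bub (snd l)}"
  using assms(3)
proof (induction rule: rtrancl_induct)
  case base
  have "l0 \<in> line_comp H l0" using l0 H unfolding line_comp_def by auto
  then show ?case by auto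
next
  case (step y z)
  define c where "c = fst f"
  obtain l where l: "l \<in> line_comp H l0" "bub y \<in> {bub (fst l), bub (snd l)}"
    using step.IH by blast
  have face: "face_comp col L c (fst l0) = snd f"
    using l0 unfolding face_lines_def c_def by (simp add: on_face_iff)
  have comp: "y \<in> snd f" "z \<in> snd f"
    using step.hyps unfolding face[symmetric] face_comp_def c_def by auto
  have next_line: "\<exists>l'\<in>line_comp H l0. bub z \<in> {bub (fst l'), bub (snd l')}"
    if "l' \<in> L" "fst l' \<in> {y, z}" "y \<in> {fst l', snd l'}" "z \<in> {fst l', snd l'}" for l'
  proof -
    have "fst l' \<in> face_comp col L c (fst l0)" using that(2) comp face by auto
    then have "face_comp col L c (fst l') = snd f" unfolding face[symmetric] by (rule face_comp_eq)
    then have "l' \<in> H" using H that(1) unfolding face_lines_def c_def by (auto simp: on_face_iff)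
    then have "(l, l') \<in> line_adj H"
      using l that(3) unfolding line_adj_def line_comp_def by auto
    then have "l' \<in> line_comp H l0"
      using l \<open>l' \<in> H\<close> unfolding line_comp_def by auto
    then show ?thesis using that(4) by auto
  qed
  from step.hyps(2) consider "z = cpart col c y" | "(y, z) \<in> L" | "(z, y) \<in> L"
    unfolding c_def face_rel_def by auto
  then show ?case
  proof cases
    case 2 then show ?thesis using next_line[of "(y, z)"] by auto
  next
    case 3 then show ?thesis using next_line[of "(z, y)"] by auto
  qed (use l in auto)
qed

lemma face_lines_subset_line_comp:
  assumes l0: "l0 \<in> face_lines col L f" and H: "face_lines col L f \<subseteq> H"
  shows "face_lines col L f \<subseteq> line_comp H l0"
proof
  fix l assume l: "l \<in> face_lines col L f"
  then have "fst l \<in> face_comp col L (fst f) (fst l0)"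
    using l0 face_comp_self[of "fst l" col L "fst f"] unfolding face_lines_def
    by (simp add: on_face_iff)
  then obtain l' where l': "l' \<in> line_comp H l0" "bub (fst l) \<in> {bub (fst l'), bub (snd l')}"
    using face_visits_bubbles_of_line_comp[OF l0 H] unfolding face_comp_def by blast
  have "l \<in> H" using l H by auto
  then have "(l', l) \<in> line_adj H" using l' unfolding line_adj_def line_comp_def by auto
  then show "l \<in> line_comp H l0" using l' \<open>l \<in> H\<close> unfolding line_comp_def by auto
qed

section \<open>Power counting at a fixed scale\<close>

text \<open>A face is internal to G_i exactly for i up to its scale.\<close>
definition face_scale :: "(nat \<Rightarrow> nat) \<Rightarrow> line set \<Rightarrow> (line \<Rightarrow> nat) \<Rightarrow> face \<Rightarrow> nat" where
  "face_scale col L mu f = Min (mu ` face_lines col L f)"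

definition faces_ge :: "nat set \<Rightarrow> (nat \<Rightarrow> nat) \<Rightarrow> line set \<Rightarrow> (line \<Rightarrow> nat) \<Rightarrow> nat \<Rightarrow> face set" where
  "faces_ge B col L mu i = {f \<in> int_faces B col L. i \<le> face_scale col L mu f}"

lemma le_face_scale_iff:
  assumes "finite L" "f \<in> int_faces B col L"
  shows "i \<le> face_scale col L mu f \<longleftrightarrow> (\<forall>l\<in>face_lines col L f. i \<le> mu l)"
  unfolding face_scale_def
  using face_lines_nonempty[OF assms(2)] finite_face_lines[OF assms(1)] by simp

lemma face_scale_attained:
  assumes "finite L" "f \<in> int_faces B col L"
  shows "\<exists>l\<in>face_lines col L f. mu l = face_scale col L mu f"
proof -
  have "Min (mu ` face_lines col L f) \<in> mu ` face_lines col L f"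
    using face_lines_nonempty[OF assms(2)] finite_face_lines[OF assms(1)] by (intro Min_in) auto
  then show ?thesis unfolding face_scale_def by auto
qed

lemma sub_int_faces_subset_faces_ge:
  assumes "finite L" "X \<subseteq> lines_ge L mu i"
  shows "sub_int_faces B col L X \<subseteq> faces_ge B col L mu i"
proof
  fix f assume f: "f \<in> sub_int_faces B col L X"
  then have "f \<in> int_faces B col L" unfolding sub_int_faces_def by simp
  moreover have "\<forall>l\<in>face_lines col L f. i \<le> mu l"
    using f assms(2) unfolding sub_int_faces_def face_lines_def lines_ge_def by auto
  ultimately show "f \<in> faces_ge B col L mu i"
    using le_face_scale_iff[OF assms(1)] unfolding faces_ge_def by blast
qed

lemma card_faces_ge_le_sum_F_sub:
  assumes "finite L"
  shows "card (faces_ge B col L mu i) \<le> (\<Sum>X\<in>line_comps (lines_ge L mu i). F_sub B col L X)"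
proof -
  define G where "G = lines_ge L mu i"
  have "finite G" using assms unfolding G_def lines_ge_def by simp
  have "faces_ge B col L mu i \<subseteq> (\<Union>X\<in>line_comps G. sub_int_faces B col L X)"
  proof
    fix f assume f: "f \<in> faces_ge B col L mu i"
    then have int: "f \<in> int_faces B col L" unfolding faces_ge_def by simp
    have lines: "face_lines col L f \<subseteq> G"
      using f le_face_scale_iff[OF assms int]
      unfolding faces_ge_def G_def lines_ge_def face_lines_def by auto
    obtain l0 where l0: "l0 \<in> face_lines col L f" using face_lines_nonempty[OF int] by blast
    then have "f \<in> sub_int_faces B col L (line_comp G l0)"
      using int face_lines_subset_line_comp[OF l0 lines]
      unfolding sub_int_faces_def face_lines_def by auto
    moreover have "line_comp G l0 \<in> line_comps G"
      using l0 lines line_comps_eq_image by auto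
    ultimately show "f \<in> (\<Union>X\<in>line_comps G. sub_int_faces B col L X)" by blast
  qed
  then have "card (faces_ge B col L mu i) \<le> card (\<Union>X\<in>line_comps G. sub_int_faces B col L X)"
    using finite_int_faces[OF assms] finite_line_comps[OF \<open>finite G\<close>]
    by (intro card_mono) (auto simp: sub_int_faces_def)
  also have "\<dots> \<le> (\<Sum>X\<in>line_comps G. card (sub_int_faces B col L X))"
    by (rule card_UN_le) (rule finite_line_comps[OF \<open>finite G\<close>])
  finally show ?thesis unfolding F_sub_def G_def .
qed

lemma lin_indep_rows_UN:
  fixes A :: "'r \<Rightarrow> 'c \<Rightarrow> real" and T :: "'i \<Rightarrow> 'r set"
  assumes "finite I" "\<And>X. X \<in> I \<Longrightarrow> finite (T X)"
    and indep: "\<And>X. X \<in> I \<Longrightarrow> lin_indep_rows A (T X) (C X)"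
    and cols: "\<And>X. X \<in> I \<Longrightarrow> C X \<subseteq> Cs"
    and off_block: "\<And>X Y r c. X \<in> I \<Longrightarrow> Y \<in> I \<Longrightarrow> X \<noteq> Y \<Longrightarrow> r \<in> T Y \<Longrightarrow> r \<notin> T X \<Longrightarrow>
                       c \<in> C X \<Longrightarrow> A r c = 0"
  shows "lin_indep_rows A (\<Union>X\<in>I. T X) Cs"
  unfolding lin_indep_rows_def
proof (intro allI impI ballI)
  fix a :: "'r \<Rightarrow> real" and r
  assume a: "\<forall>c\<in>Cs. (\<Sum>r\<in>(\<Union>X\<in>I. T X). a r * A r c) = 0" and "r \<in> (\<Union>X\<in>I. T X)"
  then obtain X where X: "X \<in> I" "r \<in> T X" by blast
  have "(\<Sum>q\<in>T X. a q * A q c) = 0" if c: "c \<in> C X" for c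
  proof -
    have "(\<Sum>q\<in>(\<Union>X\<in>I. T X). a q * A q c) = (\<Sum>q\<in>T X. a q * A q c)"
      using assms(1,2) X(1) off_block[OF X(1) _ _ _ _ c] by (intro sum.mono_neutral_right) auto
    then show ?thesis using a cols[OF X(1)] c by auto
  qed
  moreover have "(\<forall>c\<in>C X. (\<Sum>q\<in>T X. a q * A q c) = 0) \<longrightarrow> (\<forall>q\<in>T X. a q = 0)"
    using indep[OF X(1)] unfolding lin_indep_rows_def by (rule spec)
  ultimately show "a r = 0" using X(2) by blast
qed

lemma eps_eq_0_if_not_in_subgraph:
  "r \<in> L \<Longrightarrow> r \<notin> H \<Longrightarrow> f \<in> sub_int_faces B col L H \<Longrightarrow> eps col L r f = 0"
  unfolding sub_int_faces_def eps_def by auto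

text \<open>Independent rows of the incidence matrices of the components of G_i stay independent
  together, because a line never lies on a face internal to another component.\<close>
lemma exists_lin_indep_lines_card_sum_R_sub:
  assumes "finite L"
  shows "\<exists>T \<subseteq> L. lin_indep_rows (eps col L) T (faces_ge B col L mu i) \<and>
           card T = (\<Sum>X\<in>line_comps (lines_ge L mu i). R_sub B col L X)"
proof -
  define G where "G = lines_ge L mu i"
  have "G \<subseteq> L" "finite G" using assms unfolding G_def lines_ge_def by auto
  have finX: "finite X" if "X \<in> line_comps G" for X
    using line_comps_subset[OF that] \<open>finite G\<close> by (rule finite_subset)
  have "\<forall>X\<in>line_comps G. \<exists>T \<subseteq> X. lin_indep_rows (eps col L) T (sub_int_faces B col L X)
          \<and> card T = R_sub B col L X"
    unfolding R_sub_def using mat_rank_attained finX by blast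
  then obtain T where T: "\<And>X. X \<in> line_comps G \<Longrightarrow> T X \<subseteq> X \<and>
      lin_indep_rows (eps col L) (T X) (sub_int_faces B col L X) \<and> card (T X) = R_sub B col L X"
    by metis
  have finT: "finite (T X)" if "X \<in> line_comps G" for X
    using T[OF that] finX[OF that] finite_subset by blast
  have TL: "T X \<subseteq> L" if "X \<in> line_comps G" for X
    using T[OF that] line_comps_subset[OF that] \<open>G \<subseteq> L\<close> by blast
  have "lin_indep_rows (eps col L) (\<Union>X\<in>line_comps G. T X) (faces_ge B col L mu i)"
  proof (rule lin_indep_rows_UN)
    show "finite (line_comps G)" using \<open>finite G\<close> by (rule finite_line_comps)
    show "finite (T X)" "lin_indep_rows (eps col L) (T X) (sub_int_faces B col L X)"
      if "X \<in> line_comps G" for X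
      using finT[OF that] T[OF that] by blast+
    show "sub_int_faces B col L X \<subseteq> faces_ge B col L mu i" if "X \<in> line_comps G" for X
      using sub_int_faces_subset_faces_ge[OF assms] line_comps_subset[OF that] unfolding G_def
      by blast
    show "eps col L r f = 0"
      if "X \<in> line_comps G" "Y \<in> line_comps G" "X \<noteq> Y" "r \<in> T Y" "r \<notin> T X"
        "f \<in> sub_int_faces B col L X" for X Y r f
    proof (rule eps_eq_0_if_not_in_subgraph)
      have "r \<in> Y" using T[OF that(2)] that(4) by blast
      then show "r \<notin> X" using line_comps_disjoint[OF that(1-3)] by blast
      show "r \<in> L" using TL[OF that(2)] that(4) by blast
    qed fact
  qed
  moreover have "card (\<Union>X\<in>line_comps G. T X) = (\<Sum>X\<in>line_comps G. R_sub B col L X)"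
  proof -
    have "card (\<Union>X\<in>line_comps G. T X) = (\<Sum>X\<in>line_comps G. card (T X))"
    proof (rule card_UN_disjoint)
      show "finite (line_comps G)" using \<open>finite G\<close> by (rule finite_line_comps)
      show "\<forall>X\<in>line_comps G. finite (T X)" using finT by blast
      show "\<forall>X\<in>line_comps G. \<forall>Y\<in>line_comps G. X \<noteq> Y \<longrightarrow> T X \<inter> T Y = {}"
        using T line_comps_disjoint by blast
    qed
    then show ?thesis using T by simp
  qed
  moreover have "(\<Union>X\<in>line_comps G. T X) \<subseteq> L" using TL by blast
  ultimately show ?thesis unfolding G_def by blast
qed

lemma level_exponent_le:
  assumes "finite L"
    and span: "\<forall>f\<in>faces_ge B col L mu i.
                 in_row_span (\<lambda>f l. eps col L l f) (S \<inter> faces_ge B col L mu i) f L"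
    and "S \<subseteq> int_faces B col L"
  shows "- 2 * int (card (lines_ge L mu i)) + int (card (faces_ge B col L mu i))
           - int (card (S \<inter> faces_ge B col L mu i))
         \<le> (\<Sum>X\<in>line_comps (lines_ge L mu i). omega_deg B col L X)"
proof -
  define G where "G = lines_ge L mu i"
  have "finite G" using assms(1) unfolding G_def lines_ge_def by simp
  obtain T where T: "T \<subseteq> L" "lin_indep_rows (eps col L) T (faces_ge B col L mu i)"
    "card T = (\<Sum>X\<in>line_comps G. R_sub B col L X)"
    using exists_lin_indep_lines_card_sum_R_sub[OF assms(1)] unfolding G_def by blast
  have "card T \<le> card (S \<inter> faces_ge B col L mu i)"
  proof (rule card_lin_indep_rows_le[OF _ _ T(2)])
    show "finite T" using T(1) assms(1) by (rule finite_subset)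
    show "finite (S \<inter> faces_ge B col L mu i)"
      using assms(3) finite_int_faces[OF assms(1)] finite_subset by blast
    show "\<forall>f\<in>faces_ge B col L mu i.
            in_row_span (\<lambda>f l. eps col L l f) (S \<inter> faces_ge B col L mu i) f T"
      using span T(1) unfolding in_row_span_def by blast
  qed
  moreover have "card (faces_ge B col L mu i) \<le> (\<Sum>X\<in>line_comps G. F_sub B col L X)"
    unfolding G_def by (rule card_faces_ge_le_sum_F_sub[OF assms(1)])
  moreover have "(\<Sum>X\<in>line_comps G. omega_deg B col L X) =
      - 2 * int (\<Sum>X\<in>line_comps G. card X) + int (\<Sum>X\<in>line_comps G. F_sub B col L X)
        - int (\<Sum>X\<in>line_comps G. R_sub B col L X)"
    unfolding omega_deg_def of_nat_sum
    by (simp add: sum.distrib sum_subtractf sum_distrib_left sum_negf)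
  ultimately show ?thesis
    using sum_card_line_comps[OF \<open>finite G\<close>] T(3) unfolding G_def by linarith
qed

section \<open>Sliced propagators\<close>

lemma psq_nonneg: "0 \<le> psq p"
  unfolding psq_def by (intro sum_nonneg) auto

lemma component_sq_le_psq: "c \<in> {1..6} \<Longrightarrow> (p c)\<^sup>2 \<le> psq p"
  unfolding psq_def by (rule member_le_sum) auto

lemma cov_slice_nonneg:
  assumes "m > 0"
  shows "0 \<le> cov_slice M m k p"
  unfolding cov_slice_def cov_def chi_def using assms psq_nonneg[of p]
  by (auto intro!: divide_nonneg_pos add_nonneg_pos)

lemma cov_slice_le:
  fixes M m :: real
  assumes M: "M > 1" and m: "m > 0" and k: "k \<ge> 1"
  shows "cov_slice M m k p \<le> M\<^sup>2 * (1 + 1 / m\<^sup>2) / M ^ (2 * k)"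
proof (cases "chi M k p = 0")
  case True
  then show ?thesis unfolding cov_slice_def using M m by (auto intro!: divide_nonneg_pos)
next
  case False
  define q where "q = real_of_int (psq p)"
  have q: "0 \<le> q" unfolding q_def using psq_nonneg[of p] by simp
  have cov: "cov m p \<le> 1 / (q + m\<^sup>2)"
    using q m unfolding cov_def q_def by (auto intro!: divide_right_mono add_nonneg_pos)
  have "cov m p \<le> M\<^sup>2 * (1 + 1 / m\<^sup>2) / M ^ (2 * k)"
  proof (cases "k = 1")
    case True
    have "0 < q + m\<^sup>2" using q m by (simp add: add_nonneg_pos)
    then have "1 / (q + m\<^sup>2) \<le> 1 / m\<^sup>2" using q m by (intro divide_left_mono) auto
    then show ?thesis using cov True M by (simp add: power2_eq_square)
  next
    case False
    then have "M ^ (2 * (k - 1)) < q" using \<open>chi M k p \<noteq> 0\<close> unfolding chi_def q_def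
      by (auto split: if_splits)
    moreover have "M ^ (2 * (k - 1)) = M ^ (2 * k) / M\<^sup>2"
      using k M by (simp add: power_diff[symmetric] diff_mult_distrib2 power2_eq_square[symmetric])
    ultimately have le: "M ^ (2 * k) / M\<^sup>2 \<le> q + m\<^sup>2" by (smt (verit) zero_le_power2)
    have pos: "0 < M ^ (2 * k) / M\<^sup>2" using M by simp
    moreover have "0 < q + m\<^sup>2" using q m by (simp add: add_nonneg_pos)
    ultimately have "0 < (q + m\<^sup>2) * (M ^ (2 * k) / M\<^sup>2)" by (rule mult_pos_pos[rotated])
    then have "1 / (q + m\<^sup>2) \<le> 1 / (M ^ (2 * k) / M\<^sup>2)" by (intro divide_left_mono[OF le]) auto
    also have "\<dots> = M\<^sup>2 / M ^ (2 * k)" by simp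
    also have "\<dots> \<le> M\<^sup>2 * (1 + 1 / m\<^sup>2) / M ^ (2 * k)"
      by (intro divide_right_mono) (auto simp: distrib_left)
    finally show ?thesis using cov by simp
  qed
  moreover have "chi M k p = 1" using False unfolding chi_def by (auto split: if_splits)
  ultimately show ?thesis unfolding cov_slice_def by simp
qed

lemma cov_slice_nonzero_imp:
  assumes "cov_slice M m k p \<noteq> 0"
  shows "(\<Sum>c=1..6. p c) = 0" "real_of_int (psq p) \<le> M ^ (2 * k)"
  using assms unfolding cov_slice_def cov_def chi_def
  by (auto split: if_splits simp: power2_eq_square)

section \<open>Admissible face momenta\<close>

definition admissible_momenta :: "real \<Rightarrow> nat set \<Rightarrow> (nat \<Rightarrow> nat) \<Rightarrow> line set \<Rightarrow> (face \<Rightarrow> int)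
    \<Rightarrow> (line \<Rightarrow> nat) \<Rightarrow> (face \<Rightarrow> int) set" where
  "admissible_momenta M B col L E mu = {P. (\<forall>f. f \<notin> int_faces B col L \<longrightarrow> P f = 0) \<and>
      (\<forall>f\<in>int_faces B col L. real_of_int \<bar>P f\<bar> \<le> M ^ face_scale col L mu f) \<and>
      (\<forall>l\<in>L. (\<Sum>c=1..6. line_mom B col L P E l c) = 0)}"

lemma admissible_momenta_if_nonzero:
  fixes M m :: real
  assumes M: "M > 1" and "finite L"
    and P: "\<forall>f. f \<notin> int_faces B col L \<longrightarrow> P f = 0"
    and nonzero: "(\<Prod>l\<in>L. cov_slice M m (mu l) (line_mom B col L P E l)) \<noteq> 0"
  shows "P \<in> admissible_momenta M B col L E mu"
proof -
  have line: "cov_slice M m (mu l) (line_mom B col L P E l) \<noteq> 0" if "l \<in> L" for l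
    using nonzero that \<open>finite L\<close> by auto
  have "real_of_int \<bar>P f\<bar> \<le> M ^ face_scale col L mu f" if f: "f \<in> int_faces B col L" for f
  proof -
    obtain l where l: "l \<in> face_lines col L f" "mu l = face_scale col L mu f"
      using face_scale_attained[OF \<open>finite L\<close> f] by blast
    then have "l \<in> L" "line_mom B col L P E l (fst f) = P f"
      using f unfolding face_lines_def line_mom_def on_face_def by (auto simp: Let_def)
    then have "real_of_int ((P f)\<^sup>2) \<le> M ^ (2 * mu l)"
      using component_sq_le_psq[OF colour_int_face[OF f], of "line_mom B col L P E l"]
        cov_slice_nonzero_imp(2)[OF line] by (smt (verit) of_int_le_iff)
    then have "(real_of_int (P f))\<^sup>2 \<le> (M ^ mu l)\<^sup>2"
      by (simp add: power_mult[symmetric] mult.commute)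
    then have "\<bar>real_of_int (P f)\<bar> \<le> \<bar>M ^ mu l\<bar>" by (simp only: abs_le_square_iff)
    then show ?thesis using M l(2) by simp
  qed
  then show ?thesis
    unfolding admissible_momenta_def using P line cov_slice_nonzero_imp(1) by blast
qed

lemma line_mom_sum_diff:
  assumes "S \<subseteq> int_faces B col L" "finite S"
    and agree: "\<forall>f\<in>int_faces B col L - S. P f = P' f"
  shows "(\<Sum>c=1..6. line_mom B col L P E l c) - (\<Sum>c=1..6. line_mom B col L P' E l c)
       = (\<Sum>f\<in>S. if on_face col L l f then P f - P' f else 0)"
proof -
  define g where "g c = face_thru col L c l" for c
  have inj: "inj_on g {c\<in>{1..6}. g c \<in> S}" unfolding inj_on_def g_def face_thru_def by auto
  have img: "g ` {c\<in>{1..6}. g c \<in> S} = {f\<in>S. on_face col L l f}"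
    using assms(1) colour_int_face unfolding g_def on_face_def face_thru_def by force
  have "(\<Sum>c=1..6. line_mom B col L P E l c) - (\<Sum>c=1..6. line_mom B col L P' E l c)
      = (\<Sum>c\<in>{1..6}. if g c \<in> S then P (g c) - P' (g c) else 0)"
    unfolding sum_subtractf[symmetric] using assms(1) agree
    by (intro sum.cong) (auto simp: line_mom_def g_def Let_def)
  also have "\<dots> = (\<Sum>c\<in>{c\<in>{1..6}. g c \<in> S}. P (g c) - P' (g c))"
    by (rule sum.inter_filter[symmetric]) simp
  also have "\<dots> = (\<Sum>f\<in>g ` {c\<in>{1..6}. g c \<in> S}. P f - P' f)"
    by (subst sum.reindex[OF inj]) (simp add: comp_def)
  also have "\<dots> = (\<Sum>f\<in>S. if on_face col L l f then P f - P' f else 0)"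
    unfolding img using assms(2) by (rule sum.inter_filter)
  finally show ?thesis .
qed

text \<open>Momentum conservation determines the momenta of independent faces from the others.\<close>
lemma inj_on_restrict_admissible_momenta:
  assumes "finite L" "S \<subseteq> int_faces B col L"
    and indep: "lin_indep_rows (\<lambda>f l. eps col L l f) S L"
  shows "inj_on (\<lambda>P. restrict P (int_faces B col L - S)) (admissible_momenta M B col L E mu)"
proof (rule inj_onI)
  fix P P' assume P: "P \<in> admissible_momenta M B col L E mu"
    and P': "P' \<in> admissible_momenta M B col L E mu"
    and eq: "restrict P (int_faces B col L - S) = restrict P' (int_faces B col L - S)"
  have agree: "\<forall>f\<in>int_faces B col L - S. P f = P' f" using eq by (metis restrict_apply')
  have "finite S" using assms(2) finite_int_faces[OF assms(1)] finite_subset by blast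
  have "(\<Sum>f\<in>S. real_of_int (P f - P' f) * eps col L l f) = 0" if "l \<in> L" for l
  proof -
    have "(\<Sum>f\<in>S. real_of_int (P f - P' f) * eps col L l f)
        = real_of_int (\<Sum>f\<in>S. if on_face col L l f then P f - P' f else 0)"
      unfolding of_int_sum by (intro sum.cong) (auto simp: eps_def)
    also have "\<dots> = 0"
      using line_mom_sum_diff[OF assms(2) \<open>finite S\<close> agree, of E l] P P' that
      unfolding admissible_momenta_def by simp
    finally show ?thesis .
  qed
  then have "\<forall>f\<in>S. real_of_int (P f - P' f) = 0"
    using indep unfolding lin_indep_rows_def
    by (elim allE[of _ "\<lambda>f. real_of_int (P f - P' f)"]) blast
  then have "P f = P' f" if "f \<in> int_faces B col L" for f
    using agree that by (cases "f \<in> S") auto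
  moreover have "P f = P' f" if "f \<notin> int_faces B col L" for f
  proof -
    have "P f = 0" "P' f = 0" using P P' that unfolding admissible_momenta_def by blast+
    then show ?thesis by simp
  qed
  ultimately show "P = P'" by blast
qed

lemma card_admissible_momenta_le:
  fixes M :: real
  assumes "finite L" "S \<subseteq> int_faces B col L" "lin_indep_rows (\<lambda>f l. eps col L l f) S L"
  shows "finite (admissible_momenta M B col L E mu)"
    "card (admissible_momenta M B col L E mu)
       \<le> (\<Prod>f\<in>int_faces B col L - S. nat (2 * \<lfloor>M ^ face_scale col L mu f\<rfloor> + 1))"
proof -
  define X where "X = int_faces B col L - S"
  define Q where "Q = PiE X (\<lambda>f. {- \<lfloor>M ^ face_scale col L mu f\<rfloor> .. \<lfloor>M ^ face_scale col L mu f\<rfloor>})"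
  have "finite X" unfolding X_def using finite_int_faces[OF assms(1)] by simp
  then have "finite Q" unfolding Q_def by (intro finite_PiE) auto
  have img: "(\<lambda>P. restrict P X) ` admissible_momenta M B col L E mu \<subseteq> Q"
  proof clarify
    fix P assume P: "P \<in> admissible_momenta M B col L E mu"
    have "P f \<in> {- \<lfloor>M ^ face_scale col L mu f\<rfloor> .. \<lfloor>M ^ face_scale col L mu f\<rfloor>}"
      if "f \<in> X" for f
      using P that unfolding admissible_momenta_def X_def
      by (auto simp: le_floor_iff abs_le_iff minus_le_iff)
    then show "restrict P X \<in> Q" unfolding Q_def by (simp add: restrict_PiE_iff)
  qed
  have inj: "inj_on (\<lambda>P. restrict P X) (admissible_momenta M B col L E mu)"
    unfolding X_def using assms by (rule inj_on_restrict_admissible_momenta)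
  show "finite (admissible_momenta M B col L E mu)"
    using finite_imageD[OF finite_subset[OF img \<open>finite Q\<close>] inj] .
  have "card (admissible_momenta M B col L E mu) \<le> card Q"
    by (rule card_inj_on_le[OF inj img \<open>finite Q\<close>])
  also have "card Q = (\<Prod>f\<in>X. nat (2 * \<lfloor>M ^ face_scale col L mu f\<rfloor> + 1))"
    unfolding Q_def card_PiE[OF \<open>finite X\<close>] by (intro prod.cong) auto
  finally show "card (admissible_momenta M B col L E mu)
       \<le> (\<Prod>f\<in>int_faces B col L - S. nat (2 * \<lfloor>M ^ face_scale col L mu f\<rfloor> + 1))"
    unfolding X_def .
qed

lemma prod_card_int_intervals_le:
  fixes M :: real
  assumes "M \<ge> 1"
  shows "(\<Prod>x\<in>X. real (nat (2 * \<lfloor>M ^ g x\<rfloor> + 1))) \<le> 3 ^ card X * M ^ (\<Sum>x\<in>X. g x)"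
proof (cases "finite X")
  case True
  have "(\<Prod>x\<in>X. real (nat (2 * \<lfloor>M ^ g x\<rfloor> + 1))) \<le> (\<Prod>x\<in>X. 3 * M ^ g x)"
  proof (rule prod_mono)
    fix x
    have "1 \<le> M ^ g x" using assms by simp
    then have "real (nat (2 * \<lfloor>M ^ g x\<rfloor> + 1)) = 2 * real_of_int \<lfloor>M ^ g x\<rfloor> + 1"
      by simp
    also have "\<dots> \<le> 3 * M ^ g x" using \<open>1 \<le> M ^ g x\<close> of_int_floor_le[of "M ^ g x"] by linarith
    finally show "0 \<le> real (nat (2 * \<lfloor>M ^ g x\<rfloor> + 1)) \<and>
                  real (nat (2 * \<lfloor>M ^ g x\<rfloor> + 1)) \<le> 3 * M ^ g x" by simp
  qed
  also have "\<dots> = 3 ^ card X * M ^ (\<Sum>x\<in>X. g x)"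
    by (simp add: prod.distrib power_sum)
  finally show ?thesis .
qed simp

lemma real_card_admissible_momenta_le:
  fixes M :: real
  assumes "M \<ge> 1" "finite L" "S \<subseteq> int_faces B col L" "lin_indep_rows (\<lambda>f l. eps col L l f) S L"
  shows "real (card (admissible_momenta M B col L E mu))
           \<le> 3 ^ (6 * card L) * M ^ (\<Sum>f\<in>int_faces B col L - S. face_scale col L mu f)"
proof -
  have "real (card (admissible_momenta M B col L E mu))
      \<le> (\<Prod>f\<in>int_faces B col L - S. real (nat (2 * \<lfloor>M ^ face_scale col L mu f\<rfloor> + 1)))"
    using card_admissible_momenta_le(2)[OF assms(2-4)] of_nat_le_iff by (metis of_nat_prod)
  also have "\<dots> \<le> 3 ^ card (int_faces B col L - S) * M ^ (\<Sum>f\<in>int_faces B col L - S. face_scale col L mu f)"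
    using assms(1) by (rule prod_card_int_intervals_le)
  also have "\<dots> \<le> 3 ^ (6 * card L) * M ^ (\<Sum>f\<in>int_faces B col L - S. face_scale col L mu f)"
  proof -
    have "card (int_faces B col L - S) \<le> card (int_faces B col L)"
      by (rule card_mono[OF finite_int_faces[OF assms(2)]]) auto
    also have "\<dots> \<le> 6 * card L" by (rule card_int_faces_le[OF assms(2)])
    finally show ?thesis using assms(1) by (intro mult_right_mono power_increasing) auto
  qed
  finally show ?thesis .
qed

section \<open>The amplitude bound\<close>

lemma amplitude_eq_sum_admissible_momenta:
  assumes "M > 1" "finite L" "finite (admissible_momenta M B col L E mu)"
  shows "amplitude M m B col L E mu =
           (\<Sum>P\<in>admissible_momenta M B col L E mu. \<Prod>l\<in>L. cov_slice M m (mu l) (line_mom B col L P E l))"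
proof -
  let ?T = "\<lambda>P. \<Prod>l\<in>L. cov_slice M m (mu l) (line_mom B col L P E l)"
  have "amplitude M m B col L E mu = infsum ?T (admissible_momenta M B col L E mu)"
    unfolding amplitude_def
  proof (rule infsum_cong_neutral)
    show "?T P = 0" if "P \<in> {P. \<forall>f. f \<notin> int_faces B col L \<longrightarrow> P f = 0} - admissible_momenta M B col L E mu"
      for P
      using that admissible_momenta_if_nonzero[OF assms(1,2)] by blast
  qed (auto simp: admissible_momenta_def)
  then show ?thesis using assms(3) by simp
qed

lemma abs_amplitude_le:
  fixes M m :: real
  assumes M: "M > 1" and m: "m > 0" and "finite L" and mu: "\<forall>l\<in>L. 1 \<le> mu l"
    and "finite (admissible_momenta M B col L E mu)"
  shows "\<bar>amplitude M m B col L E mu\<bar> \<le> real (card (admissible_momenta M B col L E mu)) *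
           (M\<^sup>2 * (1 + 1 / m\<^sup>2)) ^ card L * M powi (- 2 * int (\<Sum>l\<in>L. mu l))"
proof -
  define C where "C = M\<^sup>2 * (1 + 1 / m\<^sup>2)"
  let ?T = "\<lambda>P. \<Prod>l\<in>L. cov_slice M m (mu l) (line_mom B col L P E l)"
  have nonneg: "0 \<le> ?T P" for P using cov_slice_nonneg[OF m] by (intro prod_nonneg) blast
  have "?T P \<le> (\<Prod>l\<in>L. C / M ^ (2 * mu l))" for P
    using cov_slice_le[OF M m] cov_slice_nonneg[OF m] mu unfolding C_def by (intro prod_mono) blast
  also have "(\<Prod>l\<in>L. C / M ^ (2 * mu l)) = C ^ card L * M powi (- 2 * int (\<Sum>l\<in>L. mu l))"
  proof -
    define s where "s = (\<Sum>l\<in>L. mu l)"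
    have "(\<Prod>l\<in>L. M ^ (2 * mu l)) = M ^ (2 * s)"
      unfolding s_def by (simp add: power_sum[symmetric] sum_distrib_left)
    moreover have "M powi (- 2 * int s) = 1 / M ^ (2 * s)"
      by (metis mult_minus_left of_nat_mult of_nat_numeral power_int_minus_divide power_int_of_nat)
    ultimately show ?thesis unfolding s_def[symmetric] by (simp add: prod_dividef)
  qed
  finally have "?T P \<le> C ^ card L * M powi (- 2 * int (\<Sum>l\<in>L. mu l))" for P .
  then have "(\<Sum>P\<in>admissible_momenta M B col L E mu. ?T P)
      \<le> real (card (admissible_momenta M B col L E mu)) * (C ^ card L * M powi (- 2 * int (\<Sum>l\<in>L. mu l)))"
    by (rule sum_bounded_above)
  moreover have "0 \<le> (\<Sum>P\<in>admissible_momenta M B col L E mu. ?T P)" using nonneg by (rule sum_nonneg)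
  ultimately show ?thesis
    unfolding amplitude_eq_sum_admissible_momenta[OF M assms(3,5)] C_def by simp
qed

lemma sum_eq_sum_card_le:
  fixes g :: "'a \<Rightarrow> nat"
  assumes "finite X" "\<forall>x\<in>X. g x \<le> N"
  shows "(\<Sum>x\<in>X. g x) = (\<Sum>i\<in>{1..N}. card {x\<in>X. i \<le> g x})"
proof -
  have "(\<Sum>i\<in>{1..N}. card {x\<in>X. i \<le> g x}) = (\<Sum>i\<in>{1..N}. \<Sum>x\<in>X. if i \<le> g x then 1 else 0)"
    using assms(1) by (simp add: sum.If_cases Int_def)
  also have "\<dots> = (\<Sum>x\<in>X. \<Sum>i\<in>{1..N}. if i \<le> g x then 1 else 0)" by (rule sum.swap)
  also have "\<dots> = (\<Sum>x\<in>X. g x)"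
  proof (rule sum.cong[OF refl])
    fix x assume "x \<in> X"
    then have "{i\<in>{1..N}. i \<le> g x} = {1..g x}" using assms(2) by auto
    then show "(\<Sum>i\<in>{1..N}. if i \<le> g x then 1 else 0) = g x"
      by (simp add: sum.If_cases Int_def)
  qed
  finally show ?thesis by simp
qed

lemma prod_power_int:
  fixes M :: "'a :: field"
  assumes "M \<noteq> 0"
  shows "(\<Prod>a\<in>A. M powi g a) = M powi (\<Sum>a\<in>A. g a)"
  by (induction A rule: infinite_finite_induct) (simp_all add: power_int_add assms)

lemma scale_levels_eq:
  fixes mu :: "line \<Rightarrow> nat"
  assumes "finite L"
  shows "{i. 1 \<le> i \<and> (\<exists>l\<in>L. i \<le> mu l)} = {1..Max (insert 0 (mu ` L))}"
  using assms by (auto simp: Max_ge_iff)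

lemma face_scale_le_Max:
  assumes "finite L" "f \<in> int_faces B col L"
  shows "face_scale col L mu f \<le> Max (insert 0 (mu ` L))"
proof -
  obtain l where "l \<in> face_lines col L f" "mu l = face_scale col L mu f"
    using face_scale_attained[OF assms] by blast
  then show ?thesis using assms(1) unfolding face_lines_def by (metis (lifting) Max_ge finite_imageI
        finite_insert image_eqI insertCI mem_Collect_eq)
qed

lemma exists_scale_adapted_face_basis:
  assumes "finite L"
  shows "\<exists>S \<subseteq> int_faces B col L. lin_indep_rows (\<lambda>f l. eps col L l f) S L \<and>
           (\<forall>i. \<forall>f\<in>faces_ge B col L mu i.
                 in_row_span (\<lambda>f l. eps col L l f) (S \<inter> faces_ge B col L mu i) f L)"
proof -
  have "faces_ge B col L mu i = {}" if "Max (insert 0 (mu ` L)) < i" for i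
  proof -
    have "face_scale col L mu f < i" if "f \<in> int_faces B col L" for f
      using face_scale_le_Max[OF assms that, of mu] \<open>Max (insert 0 (mu ` L)) < i\<close> by linarith
    then show ?thesis unfolding faces_ge_def by force
  qed
  moreover have "finite (faces_ge B col L mu i)" for i
    using finite_int_faces[OF assms] unfolding faces_ge_def by simp
  moreover have "faces_ge B col L mu (Suc i) \<subseteq> faces_ge B col L mu i" for i
    unfolding faces_ge_def by auto
  ultimately obtain S where "S \<subseteq> faces_ge B col L mu 0" "lin_indep_rows (\<lambda>f l. eps col L l f) S L"
    "\<forall>i. \<forall>f\<in>faces_ge B col L mu i.
       in_row_span (\<lambda>f l. eps col L l f) (S \<inter> faces_ge B col L mu i) f L"
    using exists_lin_indep_rows_spanning_filtration by metis
  moreover have "faces_ge B col L mu 0 = int_faces B col L" unfolding faces_ge_def by simp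
  ultimately show ?thesis by auto
qed

lemma scale_exponent_le:
  assumes "finite L" "S \<subseteq> int_faces B col L"
    and span: "\<forall>i. \<forall>f\<in>faces_ge B col L mu i.
                 in_row_span (\<lambda>f l. eps col L l f) (S \<inter> faces_ge B col L mu i) f L"
  shows "int (\<Sum>f\<in>int_faces B col L - S. face_scale col L mu f) - 2 * int (\<Sum>l\<in>L. mu l)
           \<le> (\<Sum>i\<in>{i. 1 \<le> i \<and> (\<exists>l\<in>L. i \<le> mu l)}.
                \<Sum>X\<in>line_comps (lines_ge L mu i). omega_deg B col L X)"
proof -
  define N where "N = Max (insert 0 (mu ` L))"
  let ?F = "faces_ge B col L mu"
  have "(\<Sum>l\<in>L. mu l) = (\<Sum>i\<in>{1..N}. card (lines_ge L mu i))"
    unfolding N_def lines_ge_def using assms(1) by (intro sum_eq_sum_card_le) auto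
  moreover have "(\<Sum>f\<in>int_faces B col L - S. face_scale col L mu f) = (\<Sum>i\<in>{1..N}. card (?F i - S))"
  proof -
    have "{f \<in> int_faces B col L - S. i \<le> face_scale col L mu f} = ?F i - S" for i
      unfolding faces_ge_def by auto
    then show ?thesis
      unfolding N_def using finite_int_faces[OF assms(1)] face_scale_le_Max[OF assms(1)]
      by (subst sum_eq_sum_card_le) auto
  qed
  moreover have "int (card (?F i - S)) = int (card (?F i)) - int (card (S \<inter> ?F i))" for i
    using finite_int_faces[OF assms(1)] unfolding faces_ge_def
    by (simp add: card_Diff_subset_Int Int_commute of_nat_diff card_mono)
  ultimately have "int (\<Sum>f\<in>int_faces B col L - S. face_scale col L mu f) - 2 * int (\<Sum>l\<in>L. mu l)
      = (\<Sum>i\<in>{1..N}. - 2 * int (card (lines_ge L mu i)) + int (card (?F i)) - int (card (S \<inter> ?F i)))"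
    by (simp add: of_nat_sum sum_subtractf sum.distrib sum_distrib_left)
  also have "\<dots> \<le> (\<Sum>i\<in>{1..N}. \<Sum>X\<in>line_comps (lines_ge L mu i). omega_deg B col L X)"
    using level_exponent_le[OF assms(1) _ assms(2)] span by (intro sum_mono) blast
  finally show ?thesis unfolding N_def scale_levels_eq[OF assms(1)] .
qed

lemma amplitude_power_counting:
  fixes M m :: real
  assumes M: "M > 1" and m: "m > 0" and "feyn_graph B col L" and mu: "\<forall>l\<in>L. 1 \<le> mu l"
  shows "\<bar>amplitude M m B col L E mu\<bar> \<le> (3 ^ 6 * (M\<^sup>2 * (1 + 1 / m\<^sup>2))) ^ card L *
           (\<Prod>i\<in>{i. 1 \<le> i \<and> (\<exists>l\<in>L. i \<le> mu l)}.
              \<Prod>H\<in>line_comps (lines_ge L mu i). M powi omega_deg B col L H)"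
proof -
  define C where "C = M\<^sup>2 * (1 + 1 / m\<^sup>2)"
  define s where "s = (\<Sum>l\<in>L. mu l)"
  define \<Omega> where "\<Omega> = (\<Sum>i\<in>{i. 1 \<le> i \<and> (\<exists>l\<in>L. i \<le> mu l)}.
                        \<Sum>H\<in>line_comps (lines_ge L mu i). omega_deg B col L H)"
  have "C > 0" unfolding C_def using M m by (simp add: add_pos_pos)
  have "finite L" using assms(3) by (rule finite_lines)
  obtain S where S: "S \<subseteq> int_faces B col L" "lin_indep_rows (\<lambda>f l. eps col L l f) S L"
    "\<forall>i. \<forall>f\<in>faces_ge B col L mu i. in_row_span (\<lambda>f l. eps col L l f) (S \<inter> faces_ge B col L mu i) f L"
    using exists_scale_adapted_face_basis[OF \<open>finite L\<close>, of B col mu] by blast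
  define SF where "SF = (\<Sum>f\<in>int_faces B col L - S. face_scale col L mu f)"
  have "\<bar>amplitude M m B col L E mu\<bar>
      \<le> real (card (admissible_momenta M B col L E mu)) * (C ^ card L * M powi (- 2 * int s))"
    using abs_amplitude_le[OF M m \<open>finite L\<close> mu card_admissible_momenta_le(1)[OF \<open>finite L\<close> S(1,2)]]
    unfolding C_def s_def by (simp add: mult.assoc)
  also have "\<dots> \<le> (3 ^ (6 * card L) * M ^ SF) * (C ^ card L * M powi (- 2 * int s))"
    using real_card_admissible_momenta_le[OF _ \<open>finite L\<close> S(1,2)] M \<open>C > 0\<close> unfolding SF_def
    by (intro mult_right_mono) auto
  also have "\<dots> = (3 ^ 6 * C) ^ card L * M powi (int SF - 2 * int s)"
  proof -
    have "M powi (int SF + - 2 * int s) = M powi int SF * M powi (- 2 * int s)"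
      by (rule power_int_add) (use M in simp)
    then have "M powi (int SF - 2 * int s) = M ^ SF * M powi (- 2 * int s)" by simp
    moreover have "(3 ^ 6 * C) ^ card L = 3 ^ (6 * card L) * C ^ card L"
      by (simp add: power_mult power_mult_distrib)
    moreover have "(3 ^ (6 * card L) * M ^ SF) * (C ^ card L * M powi (- 2 * int s))
        = (3 ^ (6 * card L) * C ^ card L) * (M ^ SF * M powi (- 2 * int s))"
      by (simp only: mult_ac)
    ultimately show ?thesis by (simp only:)
  qed
  also have "\<dots> \<le> (3 ^ 6 * C) ^ card L * M powi \<Omega>"
    using scale_exponent_le[OF \<open>finite L\<close> S(1,3)] M \<open>C > 0\<close> unfolding SF_def s_def \<Omega>_def
    by (intro mult_left_mono power_int_increasing) auto
  also have "M powi \<Omega> = (\<Prod>i\<in>{i. 1 \<le> i \<and> (\<exists>l\<in>L. i \<le> mu l)}.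
                    \<Prod>H\<in>line_comps (lines_ge L mu i). M powi omega_deg B col L H)"
    using M unfolding \<Omega>_def by (simp add: prod_power_int)
  finally show ?thesis unfolding C_def .
qed

theorem theorem2:
  fixes M m :: real
  assumes "M > 1" and "m > 0"
  shows "\<exists>K > 0. \<forall>(B :: nat set) (col :: nat \<Rightarrow> nat) (L :: line set) (E :: face \<Rightarrow> int)
            (mu :: line \<Rightarrow> nat).
           feyn_graph B col L \<and> connected_graph B L \<and> (\<forall>l\<in>L. 1 \<le> mu l) \<longrightarrow>
           \<bar>amplitude M m B col L E mu\<bar> \<le>
             K ^ card L *
             (\<Prod>i\<in>{i. 1 \<le> i \<and> (\<exists>l\<in>L. i \<le> mu l)}.
                \<Prod>H\<in>line_comps (lines_ge L mu i). M powi omega_deg B col L H)"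
proof (intro exI conjI allI impI)
  show "0 < 3 ^ 6 * (M\<^sup>2 * (1 + 1 / m\<^sup>2))" using assms by (simp add: add_pos_pos)
  fix B :: "nat set" and col :: "nat \<Rightarrow> nat" and L :: "line set" and E :: "face \<Rightarrow> int"
    and mu :: "line \<Rightarrow> nat"
  assume "feyn_graph B col L \<and> connected_graph B L \<and> (\<forall>l\<in>L. 1 \<le> mu l)"
  then show "\<bar>amplitude M m B col L E mu\<bar> \<le> (3 ^ 6 * (M\<^sup>2 * (1 + 1 / m\<^sup>2))) ^ card L *
             (\<Prod>i\<in>{i. 1 \<le> i \<and> (\<exists>l\<in>L. i \<le> mu l)}.
                \<Prod>H\<in>line_comps (lines_ge L mu i). M powi omega_deg B col L H)"
    using amplitude_power_counting[OF assms] by blast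
qed

end
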